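(* Let $(V,F^\bullet,h)$ be a complex polarized Hodge structure of length $w\ge1$ with Hodge decomposition $V=\bigoplus_pV^p$ and Hodge metric $h_H$. For every $u\in\mathrm{End}(V)^{-1}=\bigoplus_k\mathrm{Hom}(V^k,V^{k-1})$, with $u^*$ its $h_H$-adjoint, \[|[u,u^*]|^2_{h_H}\ge\frac{4}{w^2\cdot\dim V}\,|u|^4_{h_H},\] i.e. $\operatorname{tr}([u,u^*]^2)\ge\frac{4}{w^2\dim V}(\operatorname{tr}(uu^* ))^2$.
   Context: A complex polarized Hodge structure (weight zero) on $V$: nondegenerate hermitian form $h$ and $h$-orthogonal decomposition $V=\bigoplus_{p\in\mathbb{Z}}V^p$ with $h|_{V^p}$ positive definite for $p$ even and negative definite for $p$ odd. Its length is $b-a$ for the smallest interval $[a,b]$ with $V^p=0$ for $p\notin[a,b]$. The Hodge metric $h_H$ is the positive definite hermitian metric with the $V^p$ mutually orthogonal and $h_H=(-1)^ph$ on $V^p$; on $\mathrm{End}(V)$ the induced metric is $|u|^2_{h_H}=\operatorname{tr}(uu^* )$. *)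

theory Defs
  imports "HOL-Analysis.Analysis"
begin

text \<open>V is modelled as complex^'n (so dim V = CARD('n)); endomorphisms are complex
  matrices acting on column vectors. The Hodge decomposition V = sum V^p is given by the
  family of projections P p onto V^p along the other summands.\<close>

definition herm_adj :: "complex^'n^'m \<Rightarrow> complex^'m^'n" where
  "herm_adj A = (\<chi> i j. cnj (A $ j $ i))"

definition hform :: "complex^'n^'n \<Rightarrow> complex^'n \<Rightarrow> complex^'n \<Rightarrow> complex" where
  "hform H x y = (\<Sum>i\<in>UNIV. cnj (x $ i) * ((H *v y) $ i))"

definition hsign :: "int \<Rightarrow> complex" where
  "hsign p = (if even p then 1 else -1)"

definition hodge_support :: "(int \<Rightarrow> complex^'n^'n) \<Rightarrow> int set" where
  "hodge_support P = {p. P p \<noteq> 0}"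

text \<open>Complex polarized Hodge structure of weight zero on complex^'n.\<close>
definition is_cphs :: "complex^'n^'n \<Rightarrow> (int \<Rightarrow> complex^'n^'n) \<Rightarrow> bool" where
  "is_cphs H P \<longleftrightarrow>
     herm_adj H = H \<and> invertible H \<and>
     finite (hodge_support P) \<and>
     (\<forall>p. P p ** P p = P p) \<and>
     (\<forall>p q. p \<noteq> q \<longrightarrow> P p ** P q = 0) \<and>
     sum P (hodge_support P) = mat 1 \<and>
     (\<forall>p q x y. p \<noteq> q \<longrightarrow> hform H (P p *v x) (P q *v y) = 0) \<and>
     (\<forall>p v. P p *v v = v \<and> v \<noteq> 0 \<longrightarrow> Re (hsign p * hform H v v) > 0)"

definition hodge_length :: "(int \<Rightarrow> complex^'n^'n) \<Rightarrow> int" where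
  "hodge_length P = Max (hodge_support P) - Min (hodge_support P)"

definition hodge_metric :: "complex^'n^'n \<Rightarrow> (int \<Rightarrow> complex^'n^'n) \<Rightarrow> complex^'n^'n" where
  "hodge_metric H P = (\<Sum>p\<in>hodge_support P. \<chi> i j. hsign p * (herm_adj (P p) ** H ** P p) $ i $ j)"

definition hodge_adj :: "complex^'n^'n \<Rightarrow> (int \<Rightarrow> complex^'n^'n) \<Rightarrow> complex^'n^'n \<Rightarrow> complex^'n^'n" where
  "hodge_adj H P u = matrix_inv (hodge_metric H P) ** herm_adj u ** hodge_metric H P"

definition hodge_norm2 :: "complex^'n^'n \<Rightarrow> (int \<Rightarrow> complex^'n^'n) \<Rightarrow> complex^'n^'n \<Rightarrow> real" where
  "hodge_norm2 H P u = Re (trace (u ** hodge_adj H P u))"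

definition degree_minus_one :: "(int \<Rightarrow> complex^'n^'n) \<Rightarrow> complex^'n^'n \<Rightarrow> bool" where
  "degree_minus_one P u \<longleftrightarrow> (\<forall>k. u ** P k = P (k - 1) ** u ** P k)"

end

theory Submission
  imports Defs
begin

text \<open>Let \<open>D\<close> act on \<open>V\<^sup>p\<close> by \<open>p - c\<close>, where \<open>c\<close> is the midpoint of the Hodge support. \<open>D\<close> is
  self-adjoint for the Hodge metric, and since \<open>u\<close> lowers the degree by one, \<open>[u, D] = u\<close>; hence
  \<open>tr([u, u\<^sup>*] D) = - tr(u u\<^sup>*) = - |u|\<^sup>2\<close>. The Cauchy--Schwarz inequality for the Hodge inner
  product \<open>Re tr(X Y\<^sup>*)\<close> then gives \<open>|u|\<^sup>4 \<le> |[u, u\<^sup>*]|\<^sup>2 |D|\<^sup>2\<close>, and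
  \<open>|D|\<^sup>2 = \<Sum>\<^sub>p (p - c)\<^sup>2 dim V\<^sup>p \<le> (w/2)\<^sup>2 dim V\<close>.\<close>

lemma herm_adj_nth [simp]: "herm_adj A $ i $ j = cnj (A $ j $ i)"
  by (simp add: herm_adj_def)

lemma herm_adj_herm_adj [simp]: "herm_adj (herm_adj A) = A"
  by (simp add: vec_eq_iff)

lemma herm_adj_mult: "herm_adj ((A :: complex^'n^'m) ** (B :: complex^'k^'n)) = herm_adj B ** herm_adj A"
  by (simp add: vec_eq_iff matrix_matrix_mult_def mult.commute)

lemma herm_adj_add: "herm_adj (A + B) = herm_adj A + herm_adj B"
  by (simp add: vec_eq_iff)

lemma herm_adj_scaleR: "herm_adj (r *\<^sub>R A) = r *\<^sub>R herm_adj A"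
  by (simp add: vec_eq_iff)

lemma herm_adj_sum: "herm_adj (sum f S) = (\<Sum>p\<in>S. herm_adj (f p))"
  by (induction S rule: infinite_finite_induct) (auto simp: herm_adj_add vec_eq_iff)

lemma trace_herm_adj: "trace (herm_adj A) = cnj (trace A)"
  by (simp add: trace_def)

lemma Re_trace_herm_adj_mult_self_nonneg: "0 \<le> Re (trace (herm_adj (Z :: complex^'n^'m) ** Z))"
  by (simp add: trace_def matrix_matrix_mult_def Re_sum) (intro sum_nonneg add_nonneg_nonneg; simp)

lemma matrix_add_rdistrib: "((A :: 'a::semiring_1^'n^'m) + B) ** C = A ** C + B ** C"
  by (vector matrix_matrix_mult_def sum.distrib[symmetric] field_simps)

lemma matrix_diff_rdistrib: "((A :: 'a::ring_1^'n^'m) - B) ** C = A ** C - B ** C"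
  by (vector matrix_matrix_mult_def sum_subtractf[symmetric] field_simps)

lemma matrix_sum_rdistrib: "sum f S ** (C :: 'a::semiring_1^'k^'n) = (\<Sum>p\<in>S. (f p :: 'a^'n^'m) ** C)"
  by (induction S rule: infinite_finite_induct) (auto simp: matrix_add_rdistrib)

lemma matrix_sum_ldistrib: "(C :: 'a::semiring_1^'n^'m) ** sum f S = (\<Sum>p\<in>S. C ** (f p :: 'a^'k^'n))"
  by (induction S rule: infinite_finite_induct) (auto simp: matrix_add_ldistrib)

lemma sum_matrix_vector_mult: "sum f S *v x = (\<Sum>p\<in>S. (f p :: 'a::semiring_1^'n^'m) *v x)"
  by (induction S rule: infinite_finite_induct) (auto simp: matrix_vector_mult_add_rdistrib)

lemma trace_scaleR: "trace (r *\<^sub>R (A :: complex^'n^'n)) = r *\<^sub>R trace A"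
  by (simp add: trace_def scaleR_sum_right)

lemma trace_sum: "trace (sum f S) = (\<Sum>p\<in>S. trace (f p :: complex^'n^'n))"
  by (induction S rule: infinite_finite_induct) (auto simp: trace_add trace_0[unfolded mat_0])

lemma matrix_inv_eqI:
  fixes A B :: "'a::field^'n^'n"
  assumes "B ** A = mat 1"
  shows "matrix_inv A = B"
proof -
  have "A ** B = mat 1" using assms matrix_left_right_inverse by blast
  then have "A ** matrix_inv A = mat 1 \<and> matrix_inv A ** A = mat 1"
    unfolding matrix_inv_def using someI[of "\<lambda>A'. A ** A' = mat 1 \<and> A' ** A = mat 1" B] assms by blast
  then show ?thesis by (metis assms matrix_mul_assoc matrix_mul_lid matrix_mul_rid)
qed

lemma matrix_vector_mult_axis: "(M :: 'a::semiring_1^'n^'m) *v axis j 1 = column j M"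
  by (simp add: vec_eq_iff matrix_vector_mult_def axis_def column_def if_distrib if_distribR cong: if_cong)

lemma hform_axis_left: "hform A (axis i 1) y = (A *v y) $ i"
  by (simp add: hform_def axis_def if_distrib if_distribR cong: if_cong)

lemma hform_herm_adj_mult:
  fixes X Y :: "complex^'m^'n" and A :: "complex^'n^'n"
  shows "hform (herm_adj X ** A ** Y) x y = hform A (X *v x) (Y *v y)"
proof -
  have "hform (herm_adj X ** A ** Y) x y = (\<Sum>i\<in>UNIV. \<Sum>k\<in>UNIV. cnj (x $ i) * cnj (X $ k $ i) * (A *v (Y *v y)) $ k)"
    by (simp add: hform_def matrix_vector_mul_assoc[symmetric] matrix_vector_mult_def[of "herm_adj X"]
        sum_distrib_left mult.assoc)
  also have "\<dots> = hform A (X *v x) (Y *v y)"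
    by (subst sum.swap) (simp add: hform_def matrix_vector_mult_def[of X] sum_distrib_left sum_distrib_right mult_ac)
  finally show ?thesis .
qed

lemma herm_adj_mult_nth:
  fixes X Y :: "complex^'m^'n" and A :: "complex^'n^'n"
  shows "(herm_adj X ** A ** Y) $ i $ j = hform A (column i X) (column j Y)"
  using hform_herm_adj_mult[of X A Y "axis i 1" "axis j 1"]
  by (simp add: hform_axis_left matrix_vector_mult_axis column_def)

lemma hform_swap:
  assumes "herm_adj A = A"
  shows "hform A y x = cnj (hform A x y)"
proof -
  have A: "A $ i $ j = cnj (A $ j $ i)" for i j
    using arg_cong[OF assms, of "\<lambda>M. M $ i $ j"] by simp
  have "hform A y x = (\<Sum>i\<in>UNIV. \<Sum>j\<in>UNIV. cnj (y $ i) * A $ i $ j * x $ j)"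
    by (simp add: hform_def matrix_vector_mult_def sum_distrib_left mult.assoc)
  also have "\<dots> = (\<Sum>j\<in>UNIV. \<Sum>i\<in>UNIV. cnj (y $ i) * A $ i $ j * x $ j)"
    by (rule sum.swap)
  also have "\<dots> = cnj (hform A x y)"
    by (subst A) (simp add: hform_def matrix_vector_mult_def sum_distrib_left mult_ac)
  finally show ?thesis .
qed

lemma hform_scale: "hform A (c *s x) (d *s y) = cnj c * d * hform A x y"
  by (simp add: hform_def matrix_vector_mult_def sum_distrib_left mult_ac)

lemma hform_scaleR_matrix: "hform (r *\<^sub>R A) x y = r *\<^sub>R hform A x y"
  by (simp add: hform_def matrix_vector_mult_def scaleR_sum_right sum_distrib_left mult_ac)

lemma hform_sum_matrix: "hform (sum f S) x y = (\<Sum>p\<in>S. hform (f p) x y)"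
  by (induction S rule: infinite_finite_induct)
    (auto simp: hform_def matrix_vector_mult_def distrib_left distrib_right sum.distrib)

lemma nonneg_quadratic_discriminant:
  fixes a b c :: real
  assumes nonneg: "\<And>t. 0 \<le> a + 2 * b * t + c * t\<^sup>2" and "0 \<le> c"
  shows "b\<^sup>2 \<le> a * c"
proof (cases "c = 0")
  case True
  have "b = 0"
  proof (rule ccontr)
    assume "b \<noteq> 0"
    then have "a + 2 * b * (- (a + 1) / (2 * b)) + c * (- (a + 1) / (2 * b))\<^sup>2 = -1"
      using True by (simp add: field_simps)
    then show False using nonneg[of "- (a + 1) / (2 * b)"] by linarith
  qed
  then show ?thesis using True by simp
next
  case False
  with \<open>0 \<le> c\<close> have "0 < c" by simp
  have "0 \<le> a + 2 * b * (- b / c) + c * (- b / c)\<^sup>2" by (rule nonneg)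
  also have "\<dots> = (a * c - b\<^sup>2) / c" using \<open>0 < c\<close> by (simp add: field_simps power2_eq_square)
  finally show ?thesis using \<open>0 < c\<close> by (simp add: zero_le_divide_iff)
qed

lemma square_dist_midpoint_le:
  fixes x m M :: real
  assumes "m \<le> x" "x \<le> M"
  shows "(x - (M + m) / 2)\<^sup>2 \<le> (M - m)\<^sup>2 / 4"
proof -
  have "(x - (M + m) / 2)\<^sup>2 - (M - m)\<^sup>2 / 4 = (x - M) * (x - m)"
    by (simp add: power2_eq_square field_simps)
  also have "\<dots> \<le> 0" using assms by (intro mult_nonpos_nonneg) auto
  finally show ?thesis by simp
qed

definition metric_adj :: "complex^'n^'n \<Rightarrow> complex^'n^'n \<Rightarrow> complex^'n^'n" where
  "metric_adj G X = matrix_inv G ** herm_adj X ** G"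

locale hermitian_pos_def =
  fixes G :: "complex^'n^'n"
  assumes hermitian: "herm_adj G = G"
    and pos_def: "\<And>x. x \<noteq> 0 \<Longrightarrow> 0 < Re (hform G x x)"
begin

text \<open>The rows \<open>b\<^sub>i\<^sup>H G\<close> (\<open>i \<in> S\<close>) padded with a zero row at \<open>a\<close> form a singular matrix; a
  normalised kernel vector is the required \<open>y\<close> (Gram--Schmidt step).\<close>
lemma orthogonal_unit_vector_exists:
  fixes b :: "'n \<Rightarrow> complex^'n"
  assumes "a \<notin> S"
  obtains y where "hform G y y = 1" and "\<And>i. i \<in> S \<Longrightarrow> hform G (b i) y = 0"
proof -
  define B :: "complex^'n^'n" where "B = (\<chi> r c. if c \<in> S then b c $ r else 0)"
  have "row a (herm_adj B ** G) = 0"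
    using assms by (simp add: row_def B_def matrix_matrix_mult_def vec_eq_iff)
  then have "\<not> invertible (herm_adj B ** G)"
    by (simp add: invertible_det_nz det_zero_row)
  then obtain x where x: "herm_adj B ** G *v x = 0" "x \<noteq> 0"
    using invertible_left_inverse matrix_left_invertible_ker by blast
  have orth: "hform G (b i) x = 0" if "i \<in> S" for i
  proof -
    have "column i B = b i" using that by (simp add: B_def column_def vec_eq_iff)
    then show ?thesis
      using hform_herm_adj_mult[of B G "mat 1" "axis i 1" x] x(1)
      by (simp add: hform_axis_left matrix_vector_mult_axis)
  qed
  define r where "r = Re (hform G x x)"
  have "0 < r" using pos_def x(2) by (simp add: r_def)
  have "hform G x x = of_real r"
    using hform_swap[OF hermitian, of x x] by (simp add: r_def complex_eq_iff)
  then have "hform G (of_real (1 / sqrt r) *s x) (of_real (1 / sqrt r) *s x) = 1"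
    using \<open>0 < r\<close> by (simp add: hform_scale flip: of_real_mult)
  moreover have "hform G (b i) (of_real (1 / sqrt r) *s x) = 0" if "i \<in> S" for i
    using hform_scale[of G 1 "b i"] orth[OF that] by simp
  ultimately show thesis by (rule that)
qed

lemma orthonormal_family_exists:
  "\<exists>b :: 'n \<Rightarrow> complex^'n. \<forall>i\<in>S. \<forall>j\<in>S. hform G (b i) (b j) = (if i = j then 1 else 0)"
proof (induction S rule: finite_induct[OF finite])
  case 1
  show ?case by simp
next
  case (2 a S)
  then obtain b where b: "\<forall>i\<in>S. \<forall>j\<in>S. hform G (b i) (b j) = (if i = j then 1 else 0)"
    by blast
  obtain y where y: "hform G y y = 1" "\<And>i. i \<in> S \<Longrightarrow> hform G (b i) y = 0"
    using orthogonal_unit_vector_exists \<open>a \<notin> S\<close> by blast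
  have "hform G y (b i) = 0" if "i \<in> S" for i
    using hform_swap[OF hermitian, of y "b i"] y(2)[OF that] by simp
  then show ?case
    using b y \<open>a \<notin> S\<close> by (intro exI[of _ "b(a := y)"]) auto
qed

lemma orthonormal_frame_exists:
  obtains E :: "complex^'n^'n" where "herm_adj E ** G ** E = mat 1"
proof -
  obtain b :: "'n \<Rightarrow> complex^'n" where b: "\<And>i j. hform G (b i) (b j) = (if i = j then 1 else 0)"
    using orthonormal_family_exists[of UNIV] by blast
  define E :: "complex^'n^'n" where "E = (\<chi> r c. b c $ r)"
  have col: "column c E = b c" for c by (simp add: E_def column_def vec_eq_iff)
  have "herm_adj E ** G ** E = mat 1"
    by (simp add: vec_eq_iff herm_adj_mult_nth col b mat_def)
  then show thesis by (rule that)
qed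

lemma matrix_inv_factorization:
  obtains E :: "complex^'n^'n"
  where "herm_adj E ** G ** E = mat 1" and "matrix_inv G = E ** herm_adj E"
proof -
  obtain E :: "complex^'n^'n" where E: "herm_adj E ** G ** E = mat 1"
    using orthonormal_frame_exists by blast
  then have "G ** E ** herm_adj E = mat 1"
    using matrix_left_right_inverse by (metis matrix_mul_assoc)
  then have "E ** herm_adj E ** G = mat 1"
    using matrix_left_right_inverse by (metis matrix_mul_assoc)
  then show thesis using E matrix_inv_eqI that by blast
qed

lemma matrix_inv_mult: "matrix_inv G ** G = mat 1" and mult_matrix_inv: "G ** matrix_inv G = mat 1"
proof -
  obtain E :: "complex^'n^'n" where E: "herm_adj E ** G ** E = mat 1" "matrix_inv G = E ** herm_adj E"
    by (rule matrix_inv_factorization)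
  then have "G ** E ** herm_adj E = mat 1"
    using matrix_left_right_inverse by (metis matrix_mul_assoc)
  then show *: "G ** matrix_inv G = mat 1"
    using E(2) by (simp add: matrix_mul_assoc)
  from * show "matrix_inv G ** G = mat 1"
    by (rule matrix_left_right_inverse[THEN iffD1])
qed

lemma herm_adj_matrix_inv: "herm_adj (matrix_inv G) = matrix_inv G"
  using matrix_inv_factorization by (metis herm_adj_herm_adj herm_adj_mult)

lemma metric_adj_mult: "metric_adj G (X ** Y) = metric_adj G Y ** metric_adj G X"
proof -
  have "metric_adj G Y ** metric_adj G X
      = matrix_inv G ** herm_adj Y ** (G ** matrix_inv G) ** herm_adj X ** G"
    by (simp add: metric_adj_def matrix_mul_assoc)
  then show ?thesis by (simp add: mult_matrix_inv metric_adj_def herm_adj_mult matrix_mul_assoc)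
qed

lemma metric_adj_add: "metric_adj G (X + Y) = metric_adj G X + metric_adj G Y"
  by (simp add: metric_adj_def herm_adj_add matrix_add_ldistrib matrix_add_rdistrib)

lemma metric_adj_scaleR: "metric_adj G (r *\<^sub>R X) = r *\<^sub>R metric_adj G X"
  by (simp add: metric_adj_def herm_adj_scaleR matrix_scalar_ac scalar_matrix_assoc)

lemma metric_adj_sum: "metric_adj G (sum f S) = (\<Sum>p\<in>S. metric_adj G (f p))"
  by (simp add: metric_adj_def herm_adj_sum matrix_sum_ldistrib matrix_sum_rdistrib)

lemma metric_adj_metric_adj [simp]: "metric_adj G (metric_adj G X) = X"
proof -
  have "metric_adj G (metric_adj G X) = (matrix_inv G ** G) ** X ** (matrix_inv G ** G)"
    by (simp add: metric_adj_def herm_adj_mult hermitian herm_adj_matrix_inv matrix_mul_assoc)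
  then show ?thesis by (simp add: matrix_inv_mult)
qed

lemma trace_metric_adj: "trace (metric_adj G X) = cnj (trace X)"
proof -
  have "trace (metric_adj G X) = trace ((G ** matrix_inv G) ** herm_adj X)"
    unfolding metric_adj_def by (subst trace_mul_sym) (simp add: matrix_mul_assoc)
  then show ?thesis by (simp add: mult_matrix_inv trace_herm_adj)
qed

lemma Re_trace_mult_metric_adj_self_nonneg: "0 \<le> Re (trace (X ** metric_adj G X))"
proof -
  obtain E :: "complex^'n^'n" where E: "herm_adj E ** G ** E = mat 1" "matrix_inv G = E ** herm_adj E"
    by (rule matrix_inv_factorization)
  have EEG: "E ** herm_adj E ** G = mat 1" using E matrix_inv_mult by simp
  define Z where "Z = herm_adj E ** G ** X ** E"
  have "trace (X ** metric_adj G X) = trace ((X ** E) ** (herm_adj E ** herm_adj X ** G))"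
    by (simp add: metric_adj_def E(2) matrix_mul_assoc)
  also have "\<dots> = trace (herm_adj E ** herm_adj X ** G ** (E ** herm_adj E ** G) ** X ** E)"
    by (subst trace_mul_sym) (simp add: EEG matrix_mul_assoc)
  also have "\<dots> = trace (herm_adj Z ** Z)"
    by (simp add: Z_def herm_adj_mult hermitian matrix_mul_assoc)
  finally show ?thesis using Re_trace_herm_adj_mult_self_nonneg by simp
qed

lemma Re_trace_mult_metric_adj_commute:
  "Re (trace (Y ** metric_adj G X)) = Re (trace (X ** metric_adj G Y))"
proof -
  have "Y ** metric_adj G X = metric_adj G (X ** metric_adj G Y)"
    by (simp add: metric_adj_mult)
  then show ?thesis by (simp add: trace_metric_adj)
qed

lemma metric_adj_Cauchy_Schwarz:
  "(Re (trace (X ** metric_adj G Y)))\<^sup>2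
     \<le> Re (trace (X ** metric_adj G X)) * Re (trace (Y ** metric_adj G Y))"
proof (rule nonneg_quadratic_discriminant)
  fix t :: real
  have "trace ((X + t *\<^sub>R Y) ** metric_adj G (X + t *\<^sub>R Y))
      = trace (X ** metric_adj G X) + t *\<^sub>R trace (X ** metric_adj G Y)
        + t *\<^sub>R trace (Y ** metric_adj G X) + t\<^sup>2 *\<^sub>R trace (Y ** metric_adj G Y)"
    by (simp add: metric_adj_add metric_adj_scaleR matrix_add_ldistrib matrix_add_rdistrib
        matrix_scalar_ac scalar_matrix_assoc[symmetric] trace_add trace_scaleR scaleR_add_right
        power2_eq_square)
  then show "0 \<le> Re (trace (X ** metric_adj G X)) + 2 * Re (trace (X ** metric_adj G Y)) * t
                + Re (trace (Y ** metric_adj G Y)) * t\<^sup>2"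
    using Re_trace_mult_metric_adj_self_nonneg[of "X + t *\<^sub>R Y"] Re_trace_mult_metric_adj_commute[of Y X]
    by (simp add: algebra_simps)
qed (rule Re_trace_mult_metric_adj_self_nonneg)

end

lemma hodge_adj_eq_metric_adj: "hodge_adj H P = metric_adj (hodge_metric H P)"
  by (simp add: fun_eq_iff hodge_adj_def metric_adj_def)

lemma hsign_eq_of_real: "hsign p = of_real (Re (hsign p))"
  by (simp add: hsign_def)

locale polarized_hodge =
  fixes H :: "complex^'n^'n" and P :: "int \<Rightarrow> complex^'n^'n"
  assumes is_cphs: "is_cphs H P"
begin

lemma finite_hodge_support: "finite (hodge_support P)"
  using is_cphs by (simp add: is_cphs_def)

lemma P_mult_P: "P p ** P q = (if p = q then P p else 0)"
  using is_cphs by (simp add: is_cphs_def)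

lemma sum_P: "sum P (hodge_support P) = mat 1"
  using is_cphs by (simp add: is_cphs_def)

lemma P_eq_0: "p \<notin> hodge_support P \<Longrightarrow> P p = 0"
  by (simp add: hodge_support_def)

lemma sum_mult_P: "(\<Sum>k\<in>hodge_support P. X ** P k) = X"
  by (simp add: matrix_sum_ldistrib[symmetric] sum_P)

lemma hodge_metric_eq:
  "hodge_metric H P = (\<Sum>p\<in>hodge_support P. Re (hsign p) *\<^sub>R (herm_adj (P p) ** H ** P p))"
  unfolding hodge_metric_def
  by (intro sum.cong refl) (simp add: vec_eq_iff hsign_def)

lemma hodge_metric_mult_P:
  "hodge_metric H P ** P q = Re (hsign q) *\<^sub>R (herm_adj (P q) ** H ** P q)"
proof -
  have "hodge_metric H P ** P q
      = (\<Sum>p\<in>hodge_support P. if p = q then Re (hsign q) *\<^sub>R (herm_adj (P q) ** H ** P q) else 0)"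
    unfolding hodge_metric_eq matrix_sum_rdistrib
    by (intro sum.cong refl) (simp add: scalar_matrix_assoc[symmetric] P_mult_P flip: matrix_mul_assoc)
  then show ?thesis
    using finite_hodge_support P_eq_0[of q] by (cases "q \<in> hodge_support P") simp_all
qed

lemma hodge_metric_hermitian: "herm_adj (hodge_metric H P) = hodge_metric H P"
proof -
  have "herm_adj H = H" using is_cphs by (simp add: is_cphs_def)
  then show ?thesis
    by (simp add: hodge_metric_eq herm_adj_sum herm_adj_scaleR herm_adj_mult matrix_mul_assoc)
qed

lemma herm_adj_P_mult_hodge_metric: "herm_adj (P q) ** hodge_metric H P = hodge_metric H P ** P q"
proof -
  have "herm_adj (P q) ** hodge_metric H P = herm_adj (hodge_metric H P ** P q)"
    by (simp add: herm_adj_mult hodge_metric_hermitian)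
  also have "\<dots> = hodge_metric H P ** P q"
    using is_cphs
    by (simp add: hodge_metric_mult_P herm_adj_scaleR herm_adj_mult is_cphs_def matrix_mul_assoc)
  finally show ?thesis .
qed

lemma hodge_metric_pos_def:
  assumes "x \<noteq> 0"
  shows "0 < Re (hform (hodge_metric H P) x x)"
proof -
  have term_pos: "0 < Re (hsign p) * Re (hform H (P p *v x) (P p *v x))" if "P p *v x \<noteq> 0" for p
  proof -
    have "P p *v (P p *v x) = P p *v x" by (simp add: matrix_vector_mul_assoc P_mult_P)
    then have "0 < Re (hsign p * hform H (P p *v x) (P p *v x))"
      using is_cphs that unfolding is_cphs_def by blast
    then show ?thesis by (subst (asm) hsign_eq_of_real) simp
  qed
  have term_nonneg: "0 \<le> Re (hsign p) * Re (hform H (P p *v x) (P p *v x))" for p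
    using term_pos[of p] by (cases "P p *v x = 0") (auto simp: hform_def)
  have "(\<Sum>p\<in>hodge_support P. P p *v x) = x"
    by (simp add: sum_matrix_vector_mult[symmetric] sum_P)
  with assms obtain q where q: "q \<in> hodge_support P" "P q *v x \<noteq> 0"
    by (metis (no_types, lifting) sum.neutral)
  have "Re (hform (hodge_metric H P) x x)
      = (\<Sum>p\<in>hodge_support P. Re (hsign p) * Re (hform H (P p *v x) (P p *v x)))"
    by (simp add: hodge_metric_eq hform_sum_matrix hform_scaleR_matrix hform_herm_adj_mult Re_sum)
  also have "\<dots> > 0"
    using finite_hodge_support q term_pos term_nonneg by (intro sum_pos2) auto
  finally show ?thesis .
qed

sublocale hodge_metric: hermitian_pos_def "hodge_metric H P"
  by unfold_locales (use hodge_metric_hermitian hodge_metric_pos_def in auto)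

lemma metric_adj_P: "metric_adj (hodge_metric H P) (P p) = P p"
proof -
  have "metric_adj (hodge_metric H P) (P p)
      = matrix_inv (hodge_metric H P) ** (herm_adj (P p) ** hodge_metric H P)"
    by (simp add: metric_adj_def matrix_mul_assoc)
  then show ?thesis
    by (simp add: herm_adj_P_mult_hodge_metric matrix_mul_assoc hodge_metric.matrix_inv_mult)
qed

lemma Re_trace_P_nonneg: "0 \<le> Re (trace (P p))"
  using hodge_metric.Re_trace_mult_metric_adj_self_nonneg[of "P p"]
  by (simp add: metric_adj_P P_mult_P)

lemma sum_Re_trace_P: "(\<Sum>p\<in>hodge_support P. Re (trace (P p))) = real CARD('n)"
proof -
  have "(\<Sum>p\<in>hodge_support P. Re (trace (P p))) = Re (trace (sum P (hodge_support P)))"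
    by (simp add: trace_sum Re_sum)
  then show ?thesis by (simp add: sum_P trace_I)
qed

definition shifted_grading :: "real \<Rightarrow> complex^'n^'n" where
  "shifted_grading c = (\<Sum>p\<in>hodge_support P. (of_int p - c) *\<^sub>R P p)"

lemma shifted_grading_mult_P: "shifted_grading c ** P q = (of_int q - c) *\<^sub>R P q"
proof -
  have "shifted_grading c ** P q = (\<Sum>p\<in>hodge_support P. if p = q then (of_int q - c) *\<^sub>R P q else 0)"
    unfolding shifted_grading_def matrix_sum_rdistrib
    by (intro sum.cong refl) (simp add: scalar_matrix_assoc[symmetric] P_mult_P)
  then show ?thesis
    using finite_hodge_support P_eq_0[of q] by (cases "q \<in> hodge_support P") simp_all
qed

lemma metric_adj_shifted_grading:
  "metric_adj (hodge_metric H P) (shifted_grading c) = shifted_grading c"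
  by (simp add: shifted_grading_def hodge_metric.metric_adj_sum hodge_metric.metric_adj_scaleR metric_adj_P)

lemma Re_trace_shifted_grading_square:
  "Re (trace (shifted_grading c ** shifted_grading c))
     = (\<Sum>p\<in>hodge_support P. (of_int p - c)\<^sup>2 * Re (trace (P p)))"
proof -
  have "shifted_grading c ** shifted_grading c
      = (\<Sum>p\<in>hodge_support P. (of_int p - c) *\<^sub>R (shifted_grading c ** P p))"
    by (subst (2) shifted_grading_def)
      (simp add: matrix_sum_ldistrib matrix_scalar_ac scalar_matrix_assoc[symmetric])
  also have "\<dots> = (\<Sum>p\<in>hodge_support P. (of_int p - c)\<^sup>2 *\<^sub>R P p)"
    by (simp add: shifted_grading_mult_P power2_eq_square)
  finally show ?thesis by (simp add: trace_sum trace_scaleR Re_sum)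
qed

lemma Re_trace_shifted_grading_square_le:
  defines "c \<equiv> (of_int (Max (hodge_support P)) + of_int (Min (hodge_support P))) / 2"
  shows "Re (trace (shifted_grading c ** shifted_grading c))
           \<le> (of_int (hodge_length P))\<^sup>2 / 4 * real CARD('n)"
proof -
  have "Re (trace (shifted_grading c ** shifted_grading c))
      \<le> (\<Sum>p\<in>hodge_support P. (of_int (hodge_length P))\<^sup>2 / 4 * Re (trace (P p)))"
    unfolding Re_trace_shifted_grading_square
  proof (intro sum_mono mult_right_mono Re_trace_P_nonneg)
    fix p assume "p \<in> hodge_support P"
    then have "Min (hodge_support P) \<le> p" "p \<le> Max (hodge_support P)"
      using finite_hodge_support by auto
    then show "(of_int p - c)\<^sup>2 \<le> (of_int (hodge_length P))\<^sup>2 / 4"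
      unfolding c_def hodge_length_def of_int_diff by (intro square_dist_midpoint_le) simp_all
  qed
  also have "\<dots> = (of_int (hodge_length P))\<^sup>2 / 4 * real CARD('n)"
    by (simp only: sum_distrib_left[symmetric] sum_Re_trace_P)
  finally show ?thesis .
qed

lemma eq_by_mult_P: "(\<And>k. X ** P k = Y ** P k) \<Longrightarrow> X = Y"
  by (metis sum_mult_P sum.cong)

lemma shifted_grading_commutator:
  assumes "degree_minus_one P u"
  shows "u ** shifted_grading c = shifted_grading c ** u + u"
proof (rule eq_by_mult_P)
  fix k
  have "shifted_grading c ** u ** P k = (of_int (k - 1) - c) *\<^sub>R (u ** P k)"
    using assms unfolding degree_minus_one_def
    by (metis matrix_mul_assoc scalar_matrix_assoc shifted_grading_mult_P)
  then have "(shifted_grading c ** u + u) ** P k = (of_int k - c) *\<^sub>R (u ** P k)"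
    by (simp add: matrix_add_rdistrib scaleR_diff_left)
  also have "\<dots> = u ** shifted_grading c ** P k"
    by (simp add: shifted_grading_mult_P matrix_scalar_ac scalar_matrix_assoc flip: matrix_mul_assoc)
  finally show "u ** shifted_grading c ** P k = (shifted_grading c ** u + u) ** P k" ..
qed

lemma trace_commutator_mult_shifted_grading:
  assumes "degree_minus_one P u"
  defines "u' \<equiv> metric_adj (hodge_metric H P) u"
  shows "trace ((u ** u' - u' ** u) ** shifted_grading c) = - trace (u ** u')"
proof -
  have "trace ((u ** u' - u' ** u) ** shifted_grading c)
      = trace (u' ** shifted_grading c ** u) - trace (u' ** (u ** shifted_grading c))"
    using trace_mul_sym[of u "u' ** shifted_grading c"]
    by (simp add: matrix_diff_rdistrib trace_sub matrix_mul_assoc)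
  also have "\<dots> = - trace (u ** u')"
    using trace_mul_sym[of u' u]
    by (simp add: shifted_grading_commutator[OF assms(1)] matrix_add_ldistrib trace_add matrix_mul_assoc)
  finally show ?thesis .
qed

end

theorem lemma3p7:
  fixes H :: "complex^'n^'n" and P :: "int \<Rightarrow> complex^'n^'n" and u :: "complex^'n^'n"
  assumes "is_cphs H P"
    and "hodge_length P \<ge> 1"
    and "degree_minus_one P u"
  shows "hodge_norm2 H P (u ** hodge_adj H P u - hodge_adj H P u ** u)
           \<ge> 4 / (real_of_int (hodge_length P) ^ 2 * real CARD('n)) * (hodge_norm2 H P u) ^ 2"
proof -
  interpret polarized_hodge H P by unfold_locales (fact assms(1))
  define c :: real where "c = (of_int (Max (hodge_support P)) + of_int (Min (hodge_support P))) / 2"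
  define w where "w = real_of_int (hodge_length P)"
  let ?G = "hodge_metric H P" and ?D = "shifted_grading c"
  let ?\<theta> = "u ** hodge_adj H P u - hodge_adj H P u ** u"
  have "(hodge_norm2 H P u)\<^sup>2 = (Re (trace (?\<theta> ** metric_adj ?G ?D)))\<^sup>2"
    by (simp add: hodge_norm2_def hodge_adj_eq_metric_adj metric_adj_shifted_grading
        trace_commutator_mult_shifted_grading[OF assms(3)])
  also have "\<dots> \<le> hodge_norm2 H P ?\<theta> * Re (trace (?D ** metric_adj ?G ?D))"
    using hodge_metric.metric_adj_Cauchy_Schwarz by (simp add: hodge_norm2_def hodge_adj_eq_metric_adj)
  also have "\<dots> \<le> hodge_norm2 H P ?\<theta> * (w\<^sup>2 / 4 * real CARD('n))"
    using Re_trace_shifted_grading_square_le hodge_metric.Re_trace_mult_metric_adj_self_nonneg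
    by (intro mult_left_mono) (simp_all add: c_def w_def metric_adj_shifted_grading hodge_norm2_def hodge_adj_eq_metric_adj)
  finally show ?thesis
    using assms(2) by (simp add: w_def field_simps)
qed

end
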